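(* Let $s$ be a positive integer and $D^\infty=\{a=(a_{i,j})_{i,j\ge0,\ i+j>2s}:\ a_{i,j}\in\mathbb{C},\ |a_{i,j}|\le1\}$. For $a$ put $\tilde a(\xi,\eta)=\sum_{i+j>2s}a_{i,j}\xi^i\eta^j$, and let $b^*(\xi,\eta,a)$ be the formal power series in $\xi,\eta$ and the variables $a_{i,j}$, without constant term, determined by $$b^*(\xi,\eta,a)=\tilde a\big(e^{b^*(\xi,\eta,a)}\xi,\ e^{b^*(\xi,\eta,a)}\eta\big).$$ Define $\psi_a(\xi,\eta)=\big(e^{b^*(\xi,\eta,a)}\xi,\ e^{b^*(\xi,\eta,a)}\eta\big)$. Then there exists a constant $R_1\in(0,1)$, independent of $a\in D^\infty$, such that $\psi_a$ is given by power series converging (absolutely) for $(\xi,\eta,a)\in\Delta_{R_1}\times D^\infty$, and for each $a\in D^\infty$, $\psi_a$ maps $\Delta_{R_1}$ into $\Delta_{1/3}$.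
   Context: $\Delta_r=\{(\xi,\eta)\in\mathbb{C}^2:|\xi|<r,|\eta|<r\}$. *)

theory Defs
  imports "HOL-Analysis.Analysis"
begin

text \<open>A monomial is a finitely supported exponent function var => nat; a formal
  power series is a coefficient function on monomials.\<close>

datatype var = Xi | Eta | A nat nat

type_synonym mon = "var \<Rightarrow> nat"
type_synonym fser = "mon \<Rightarrow> complex"

definition mons :: "mon set" where
  "mons = {m. finite {v. m v \<noteq> 0}}"

definition mdeg :: "mon \<Rightarrow> nat" where
  "mdeg m = (\<Sum>v\<in>{v. m v \<noteq> 0}. m v)"

definition fone :: fser where
  "fone m = (if (\<forall>v. m v = 0) then 1 else 0)"

definition fmul :: "fser \<Rightarrow> fser \<Rightarrow> fser" where
  "fmul f g m = (\<Sum>p\<in>{p. \<forall>v. p v \<le> m v}. f p * g (\<lambda>v. m v - p v))"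

primrec fpow :: "fser \<Rightarrow> nat \<Rightarrow> fser" where
  "fpow f 0 = fone"
| "fpow f (Suc n) = fmul f (fpow f n)"

text \<open>Exponential of a series without constant term (the truncation at the
  total degree is exact in that case).\<close>
definition fexp :: "fser \<Rightarrow> fser" where
  "fexp f m = (\<Sum>n\<le>mdeg m. fpow f n m / of_nat (fact n))"

definition fscale :: "complex \<Rightarrow> fser \<Rightarrow> fser" where
  "fscale c f m = c * f m"

definition fxi :: fser where
  "fxi m = (if m = (\<lambda>v. if v = Xi then 1 else 0) then 1 else 0)"

definition feta :: fser where
  "feta m = (if m = (\<lambda>v. if v = Eta then 1 else 0) then 1 else 0)"

definition fterm :: "nat \<Rightarrow> nat \<Rightarrow> fser" where
  "fterm k l m = (if m = (\<lambda>v. if v = Xi then k else if v = Eta then l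
                             else if v = A k l then 1 else 0) then 1 else 0)"

text \<open>Right-hand side  a~(e^b xi, e^b eta) = sum_{k+l>2s} a_{k,l} xi^k eta^l e^{(k+l) b}.
  At a given monomial only finitely many (k,l) contribute (those with a_{k,l}
  occurring in the monomial).\<close>
definition frhs :: "nat \<Rightarrow> fser \<Rightarrow> fser" where
  "frhs s b m = (\<Sum>kl\<in>{(k, l). 2 * s < k + l \<and> 1 \<le> m (A k l)}.
                    fmul (fterm (fst kl) (snd kl)) (fexp (fscale (of_nat (fst kl + snd kl)) b)) m)"

definition is_bstar :: "nat \<Rightarrow> fser \<Rightarrow> bool" where
  "is_bstar s b \<longleftrightarrow> (\<forall>m. m \<notin> mons \<longrightarrow> b m = 0) \<and> b (\<lambda>v. 0) = 0
                     \<and> (\<forall>m\<in>mons. b m = frhs s b m)"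

definition psi1 :: "fser \<Rightarrow> fser" where "psi1 b = fmul (fexp b) fxi"
definition psi2 :: "fser \<Rightarrow> fser" where "psi2 b = fmul (fexp b) feta"

text \<open>Parameter space D^infinity; entries with i+j <= 2s do not exist and are set to 0.\<close>
definition Dinf :: "nat \<Rightarrow> (nat \<Rightarrow> nat \<Rightarrow> complex) set" where
  "Dinf s = {a. \<forall>i j. (2 * s < i + j \<longrightarrow> norm (a i j) \<le> 1) \<and> (i + j \<le> 2 * s \<longrightarrow> a i j = 0)}"

definition varval :: "complex \<Rightarrow> complex \<Rightarrow> (nat \<Rightarrow> nat \<Rightarrow> complex) \<Rightarrow> var \<Rightarrow> complex" where
  "varval x y a v = (case v of Xi \<Rightarrow> x | Eta \<Rightarrow> y | A i j \<Rightarrow> a i j)"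

definition mval :: "complex \<Rightarrow> complex \<Rightarrow> (nat \<Rightarrow> nat \<Rightarrow> complex) \<Rightarrow> mon \<Rightarrow> complex" where
  "mval x y a m = (\<Prod>v\<in>{v. m v \<noteq> 0}. varval x y a v ^ m v)"

definition abs_conv :: "fser \<Rightarrow> complex \<Rightarrow> complex \<Rightarrow> (nat \<Rightarrow> nat \<Rightarrow> complex) \<Rightarrow> bool" where
  "abs_conv f x y a \<longleftrightarrow> (\<lambda>m. norm (f m * mval x y a m)) summable_on mons"

definition fval :: "fser \<Rightarrow> complex \<Rightarrow> complex \<Rightarrow> (nat \<Rightarrow> nat \<Rightarrow> complex) \<Rightarrow> complex" where
  "fval f x y a = (\<Sum>\<^sub>\<infinity>m\<in>mons. f m * mval x y a m)"

end

theory Submission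
  imports Defs
begin

(* Every term of the right-hand side carries a factor a_{k,l}, so the coefficient of b* at a
   monomial m is determined by its coefficients at proper divisors of m: b* exists and is unique
   by induction on the degree.
   For the estimate, measure a series f by the weighted l1-norm sum_m |f_m| r^(deg_xi m + deg_eta m).
   It is submultiplicative and satisfies |e^f| <= e^|f|, so if |c| <= 1 the right-hand side
   evaluated at c has norm at most sum_{k+l>=3} (r e)^(k+l) <= 32 (r e)^3 <= 1 for r = 1/20.
   Applying this to the truncations of b* gives |b*| <= 1, hence |e^b* xi| <= e r < 1/3, and the
   norm dominates the absolute values of the series at every point of Delta_r x D^infinity. *)

lemma fmul_altdef: "fmul f g m = (\<Sum>p\<le>m. f p * g (m - p))"
  by (simp add: fmul_def atMost_def le_fun_def fun_diff_def)

lemma mon_diff_le [simp]: "(m::mon) - p \<le> m"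
  by (simp add: le_fun_def)

lemma mon_le_support: "p \<le> m \<Longrightarrow> {v. p v \<noteq> 0} \<subseteq> {v. m v \<noteq> (0::nat)}"
  by (auto simp: le_fun_def) (metis le_zero_eq not_gr0)

lemma mons_downward_closed: "m \<in> mons \<Longrightarrow> p \<le> m \<Longrightarrow> p \<in> mons"
  unfolding mons_def using mon_le_support finite_subset by blast

lemma le_mdeg: "m \<in> mons \<Longrightarrow> m v \<le> mdeg m"
  unfolding mdeg_def mons_def by (cases "m v = 0") (auto intro: member_le_sum)

lemma finite_atMost_mon: "m \<in> mons \<Longrightarrow> finite {..m}"
proof -
  assume m: "m \<in> mons"
  let ?A = "{v. m v \<noteq> 0}"
  have "{..m} \<subseteq> {p. \<forall>v. (v \<in> ?A \<longrightarrow> p v \<in> {..mdeg m}) \<and> (v \<notin> ?A \<longrightarrow> p v = 0)}"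
    using m mon_le_support by (fastforce simp: le_fun_def intro: order.trans[OF _ le_mdeg])
  moreover have "finite {p. \<forall>v. (v \<in> ?A \<longrightarrow> p v \<in> {..mdeg m}) \<and> (v \<notin> ?A \<longrightarrow> p v = (0::nat))}"
    using m by (intro finite_set_of_finite_funs) (auto simp: mons_def)
  ultimately show ?thesis by (rule finite_subset)
qed

lemma mdeg_strict_mono: "m \<in> mons \<Longrightarrow> q < m \<Longrightarrow> mdeg q < mdeg m"
proof -
  assume m: "m \<in> mons" and "q < m"
  then have le: "q \<le> m" and ne: "q \<noteq> m" by auto
  let ?A = "{v. m v \<noteq> 0}"
  have fin: "finite ?A" using m by (simp add: mons_def)
  have "mdeg q = (\<Sum>v\<in>?A. q v)"
    unfolding mdeg_def using le
    by (intro sum.mono_neutral_left fin mon_le_support) auto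
  also have "\<dots> < (\<Sum>v\<in>?A. m v)"
  proof (rule sum_strict_mono_ex1[OF fin])
    show "\<forall>v\<in>?A. q v \<le> m v" using le by (simp add: le_fun_def)
    obtain v where "q v \<noteq> m v" using ne by auto
    moreover have "q v \<le> m v" using le by (simp add: le_fun_def)
    ultimately show "\<exists>v\<in>?A. q v < m v" by (intro bexI[of _ v]) auto
  qed
  finally show ?thesis by (simp add: mdeg_def)
qed

section \<open>Causal equations and their unique solutions\<close>

lemma fmul_cong_below:
  assumes "\<And>p. p \<le> m \<Longrightarrow> f p = f' p" and "\<And>p. p \<le> m \<Longrightarrow> g p = g' p"
  shows "fmul f g m = fmul f' g' m"
  unfolding fmul_altdef using assms by (intro sum.cong) auto

lemma fpow_cong_below: "(\<And>q. q \<le> m \<Longrightarrow> f q = g q) \<Longrightarrow> fpow f n m = fpow g n m"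
proof (induction n arbitrary: m)
  case (Suc n)
  then show ?case by (auto intro!: fmul_cong_below intro: order.trans)
qed simp

lemma fexp_cong_below: "(\<And>q. q \<le> m \<Longrightarrow> f q = g q) \<Longrightarrow> fexp f m = fexp g m"
  unfolding fexp_def by (intro sum.cong refl arg_cong2[where f = "(/)"] fpow_cong_below)

definition causal :: "(fser \<Rightarrow> fser) \<Rightarrow> bool" where
  "causal \<Phi> \<longleftrightarrow> (\<forall>b c m. m \<in> mons \<longrightarrow> (\<forall>q<m. b q = c q) \<longrightarrow> \<Phi> b m = \<Phi> c m)"

definition mons_fixpoint :: "(fser \<Rightarrow> fser) \<Rightarrow> fser \<Rightarrow> bool" where
  "mons_fixpoint \<Phi> b \<longleftrightarrow> (\<forall>m. m \<notin> mons \<longrightarrow> b m = 0) \<and> (\<forall>m\<in>mons. b m = \<Phi> b m)"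

lemma causalD:
  "causal \<Phi> \<Longrightarrow> m \<in> mons \<Longrightarrow> (\<And>q. q < m \<Longrightarrow> b q = c q) \<Longrightarrow> \<Phi> b m = \<Phi> c m"
  unfolding causal_def by blast

text \<open>Every monomial of the summand a_{k,l} \<xi>^k \<eta>^l e^{(k+l) b} is divisible by a_{k,l},
  so its coefficient at m only involves coefficients of b at proper divisors of m.\<close>
lemma causal_frhs: "causal (frhs s)"
  unfolding causal_def
proof (intro allI impI)
  fix b c :: fser and m :: mon
  assume "m \<in> mons" and below: "\<forall>q<m. b q = c q"
  have "fmul (fterm k l) (fexp (fscale n b)) m = fmul (fterm k l) (fexp (fscale n c)) m"
    if "1 \<le> m (A k l)" for k l n
    unfolding fmul_altdef
  proof (intro sum.cong refl)
    fix p assume "p \<in> {..m}"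
    show "fterm k l p * fexp (fscale n b) (m - p) = fterm k l p * fexp (fscale n c) (m - p)"
    proof (cases "p (A k l) = 1")
      case True
      have "fexp (fscale n b) (m - p) = fexp (fscale n c) (m - p)"
      proof (rule fexp_cong_below)
        fix q assume q: "q \<le> m - p"
        then have "q \<le> m" using mon_diff_le order.trans by blast
        moreover have "q (A k l) \<noteq> m (A k l)"
          using q True \<open>1 \<le> m (A k l)\<close> by (auto simp: le_fun_def dest: spec[of _ "A k l"])
        ultimately show "fscale n b q = fscale n c q"
          using below by (auto simp: fscale_def less_le)
      qed
      then show ?thesis by simp
    qed (auto simp: fterm_def)
  qed
  then show "frhs s b m = frhs s c m"
    unfolding frhs_def by (intro sum.cong refl) auto
qed

lemma causal_fixpoint_unique:
  assumes \<Phi>: "causal \<Phi>" and b: "mons_fixpoint \<Phi> b" and c: "mons_fixpoint \<Phi> c"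
  shows "b = c"
proof
  fix m
  show "b m = c m"
  proof (induction "mdeg m" arbitrary: m rule: less_induct)
    case less
    show ?case
    proof (cases "m \<in> mons")
      case True
      have "\<Phi> b m = \<Phi> c m"
        using True by (intro causalD[OF \<Phi>] less mdeg_strict_mono)
      then show ?thesis using b c True by (simp add: mons_fixpoint_def)
    qed (use b c in \<open>simp add: mons_fixpoint_def\<close>)
  qed
qed

text \<open>The Picard iterates starting from 0 are correct below degree n after n steps.\<close>
lemma causal_fixpoint_exists:
  assumes \<Phi>: "causal \<Phi>"
  shows "\<exists>b. mons_fixpoint \<Phi> b"
proof -
  define it where "it n = ((\<lambda>b m. if m \<in> mons then \<Phi> b m else 0) ^^ n) (\<lambda>_. 0)" for n
  have it_Suc: "it (Suc n) m = (if m \<in> mons then \<Phi> (it n) m else 0)" for n m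
    by (simp add: it_def)
  have it_step: "\<forall>m\<in>mons. mdeg m < n \<longrightarrow> it (Suc n) m = it n m" for n
  proof (induction n)
    case (Suc n)
    show ?case
    proof (intro ballI impI)
      fix m assume m: "m \<in> mons" "mdeg m < Suc n"
      have "\<Phi> (it (Suc n)) m = \<Phi> (it n) m"
      proof (rule causalD[OF \<Phi> m(1)])
        fix q assume "q < m"
        then show "it (Suc n) q = it n q"
          using Suc.IH m mdeg_strict_mono[of m q] mons_downward_closed[of m q] by auto
      qed
      then show "it (Suc (Suc n)) m = it (Suc n) m" by (simp add: it_Suc)
    qed
  qed simp
  have stable: "it n m = it (Suc (mdeg m)) m" if "m \<in> mons" "mdeg m < n" for n m
  proof -
    have "Suc (mdeg m) \<le> n" using that(2) by simp
    then show ?thesis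
    proof (induction n rule: dec_induct)
      case (step n)
      then show ?case using it_step[of n] that(1) by simp
    qed simp
  qed
  define b where "b m = it (Suc (mdeg m)) m" for m
  have "mons_fixpoint \<Phi> b"
    unfolding mons_fixpoint_def
  proof (intro conjI allI impI ballI)
    fix m assume "m \<notin> mons"
    then show "b m = 0" by (simp add: b_def it_Suc)
  next
    fix m assume m: "m \<in> mons"
    have "\<Phi> (it (mdeg m)) m = \<Phi> b m"
    proof (rule causalD[OF \<Phi> m])
      fix q assume "q < m"
      then show "it (mdeg m) q = b q"
        using m stable mdeg_strict_mono mons_downward_closed b_def by (metis less_imp_le)
    qed
    then show "b m = \<Phi> b m" using m by (simp add: b_def it_Suc)
  qed
  then show ?thesis by blast
qed

lemma is_bstar_iff_fixpoint: "is_bstar s b \<longleftrightarrow> mons_fixpoint (frhs s) b"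
proof -
  have "(\<lambda>v. 0) \<in> mons" by (simp add: mons_def)
  moreover have "frhs s b (\<lambda>v. 0) = 0" by (simp add: frhs_def)
  ultimately show ?thesis by (auto simp: is_bstar_def mons_fixpoint_def)
qed

lemma ex1_bstar: "\<exists>!b. is_bstar s b"
  using causal_fixpoint_exists[OF causal_frhs] causal_fixpoint_unique[OF causal_frhs]
  by (auto simp: is_bstar_iff_fixpoint)

section \<open>Weighted norms of coefficient families\<close>

text \<open>The weight only counts the degree in \<xi> and \<eta>, because every a_{i,j} is bounded by 1
  on D^\<infinity>. The bound is stated for all finite partial sums, so that no summability has to
  be established in advance.\<close>
definition wt :: "real \<Rightarrow> mon \<Rightarrow> real" where
  "wt r m = r ^ (m Xi + m Eta)"

definition wnorm_le :: "real \<Rightarrow> fser \<Rightarrow> real \<Rightarrow> bool" where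
  "wnorm_le r f B \<longleftrightarrow> (\<forall>F. finite F \<and> F \<subseteq> mons \<longrightarrow> (\<Sum>m\<in>F. norm (f m) * wt r m) \<le> B)"

lemma wt_nonneg: "0 \<le> r \<Longrightarrow> 0 \<le> wt r m"
  by (simp add: wt_def)

lemma wt_diff: "p \<le> m \<Longrightarrow> wt r m = wt r p * wt r (m - p)"
  using le_funD[of p m Xi] le_funD[of p m Eta] by (simp add: wt_def power_add[symmetric])

lemma wnorm_leI:
  "(\<And>F. finite F \<Longrightarrow> F \<subseteq> mons \<Longrightarrow> (\<Sum>m\<in>F. norm (f m) * wt r m) \<le> B) \<Longrightarrow> wnorm_le r f B"
  by (simp add: wnorm_le_def)

lemma wnorm_leD: "wnorm_le r f B \<Longrightarrow> finite F \<Longrightarrow> F \<subseteq> mons \<Longrightarrow> (\<Sum>m\<in>F. norm (f m) * wt r m) \<le> B"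
  by (simp add: wnorm_le_def)

lemma wnorm_le_nonneg: "wnorm_le r f B \<Longrightarrow> 0 \<le> B"
  using wnorm_leD[of r f B "{}"] by simp

lemma wnorm_le_mono: "wnorm_le r f B \<Longrightarrow> B \<le> B' \<Longrightarrow> wnorm_le r f B'"
  unfolding wnorm_le_def by force

lemma wnorm_le_dominated:
  assumes "\<And>m. m \<in> mons \<Longrightarrow> norm (f m) \<le> norm (g m)" and "0 \<le> r" and "wnorm_le r g B"
  shows "wnorm_le r f B"
proof (rule wnorm_leI)
  fix F assume F: "finite F" "F \<subseteq> mons"
  have "(\<Sum>m\<in>F. norm (f m) * wt r m) \<le> (\<Sum>m\<in>F. norm (g m) * wt r m)"
    using assms F by (intro sum_mono mult_right_mono wt_nonneg) auto
  also have "\<dots> \<le> B" using wnorm_leD[OF assms(3) F] .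
  finally show "(\<Sum>m\<in>F. norm (f m) * wt r m) \<le> B" .
qed

lemma wnorm_le_monomial:
  assumes "\<And>m. f m = (if m = t then 1 else 0)" and "0 \<le> r"
  shows "wnorm_le r f (wt r t)"
proof (rule wnorm_leI)
  fix F :: "mon set" assume "finite F"
  then have "(\<Sum>m\<in>F. norm (f m) * wt r m) = (if t \<in> F then wt r t else 0)"
    by (simp add: assms(1) if_distrib if_distribR sum.delta' cong: if_cong)
  also have "\<dots> \<le> wt r t" using wt_nonneg[OF assms(2)] by simp
  finally show "(\<Sum>m\<in>F. norm (f m) * wt r m) \<le> wt r t" .
qed

lemma wnorm_le_fone: "0 \<le> r \<Longrightarrow> wnorm_le r fone 1"
  using wnorm_le_monomial[of fone "\<lambda>v. 0" r] by (simp add: fone_def wt_def fun_eq_iff)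

lemma wnorm_le_fxi: "0 \<le> r \<Longrightarrow> wnorm_le r fxi r"
  using wnorm_le_monomial[of fxi "\<lambda>v. if v = Xi then 1 else 0" r] by (simp add: fxi_def wt_def)

lemma wnorm_le_feta: "0 \<le> r \<Longrightarrow> wnorm_le r feta r"
  using wnorm_le_monomial[of feta "\<lambda>v. if v = Eta then 1 else 0" r] by (simp add: feta_def wt_def)

lemma wnorm_le_fterm: "0 \<le> r \<Longrightarrow> wnorm_le r (fterm k l) (r ^ (k + l))"
  using wnorm_le_monomial[of "fterm k l"
      "\<lambda>v. if v = Xi then k else if v = Eta then l else if v = A k l then 1 else 0" r]
  by (simp add: fterm_def wt_def)

lemma wnorm_le_fscale:
  assumes "wnorm_le r f B" shows "wnorm_le r (fscale c f) (norm c * B)"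
proof (rule wnorm_leI)
  fix F assume "finite F" "F \<subseteq> mons"
  then have "norm c * (\<Sum>m\<in>F. norm (f m) * wt r m) \<le> norm c * B"
    using assms by (intro mult_left_mono wnorm_leD) auto
  then show "(\<Sum>m\<in>F. norm (fscale c f m) * wt r m) \<le> norm c * B"
    by (simp add: fscale_def norm_mult sum_distrib_left mult.assoc)
qed

text \<open>The pairs (p, m - p) with p \<le> m \<in> F are distinct and lie in D \<times> D,
  where D is the down-closure of F.\<close>
lemma wnorm_le_fmul:
  assumes r: "0 \<le> r" and f: "wnorm_le r f Bf" and g: "wnorm_le r g Bg"
  shows "wnorm_le r (fmul f g) (Bf * Bg)"
proof (rule wnorm_leI)
  fix F assume F: "finite F" "F \<subseteq> mons"
  define D where "D = (\<Union>m\<in>F. {..m})"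
  define S where "S = Sigma F atMost"
  define \<phi> where "\<phi> = (\<lambda>(m, p). (p, m - p :: mon))"
  define h where "h = (\<lambda>(p, q). norm (f p) * wt r p * (norm (g q) * wt r q))"
  have D: "finite D" "D \<subseteq> mons"
    using F finite_atMost_mon mons_downward_closed by (auto simp: D_def)
  have "finite S" using F finite_atMost_mon by (auto simp: S_def)
  have "inj_on \<phi> S"
    by (rule inj_onI) (auto simp: \<phi>_def S_def le_fun_def fun_eq_iff, metis le_add_diff_inverse2)
  have "\<phi> ` S \<subseteq> D \<times> D"
    by (auto simp: \<phi>_def S_def D_def intro: order.trans[OF mon_diff_le])
  have "(\<Sum>m\<in>F. norm (fmul f g m) * wt r m) \<le> (\<Sum>m\<in>F. \<Sum>p\<le>m. h (\<phi> (m, p)))"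
  proof (rule sum_mono)
    fix m
    have "norm (fmul f g m) * wt r m \<le> (\<Sum>p\<le>m. norm (f p * g (m - p))) * wt r m"
      unfolding fmul_altdef by (intro mult_right_mono norm_sum wt_nonneg r)
    also have "\<dots> = (\<Sum>p\<le>m. h (\<phi> (m, p)))"
      by (auto simp: sum_distrib_right h_def \<phi>_def norm_mult wt_diff intro!: sum.cong)
    finally show "norm (fmul f g m) * wt r m \<le> (\<Sum>p\<le>m. h (\<phi> (m, p)))" .
  qed
  also have "\<dots> = sum h (\<phi> ` S)"
    using F(1) finite_atMost_mon F(2) \<open>inj_on \<phi> S\<close>
    by (auto simp: S_def sum.Sigma sum.reindex subset_iff)
  also have "\<dots> \<le> sum h (D \<times> D)"
    using D \<open>\<phi> ` S \<subseteq> D \<times> D\<close> r by (intro sum_mono2) (auto simp: h_def wt_nonneg)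
  also have "\<dots> = (\<Sum>p\<in>D. norm (f p) * wt r p) * (\<Sum>q\<in>D. norm (g q) * wt r q)"
    by (simp add: h_def sum_product sum.cartesian_product)
  also have "\<dots> \<le> Bf * Bg"
    using D r wnorm_le_nonneg[OF f]
    by (intro mult_mono wnorm_leD[OF f] wnorm_leD[OF g] sum_nonneg) (auto simp: wt_nonneg)
  finally show "(\<Sum>m\<in>F. norm (fmul f g m) * wt r m) \<le> Bf * Bg" .
qed

lemma wnorm_le_fpow: "0 \<le> r \<Longrightarrow> wnorm_le r f B \<Longrightarrow> wnorm_le r (fpow f n) (B ^ n)"
  by (induction n) (auto simp: wnorm_le_fone intro: wnorm_le_fmul)

lemma sum_exp_series_le_exp:
  assumes "0 \<le> (x::real)" shows "(\<Sum>n\<le>N. x ^ n / fact n) \<le> exp x"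
proof -
  have "summable (\<lambda>n. x ^ n / fact n)"
    using summable_exp_generic[of x] by (simp add: divide_inverse mult.commute)
  moreover have "exp x = (\<Sum>n. x ^ n / fact n)"
    by (simp add: exp_def divide_inverse mult.commute)
  ultimately show ?thesis using assms by (auto intro: sum_le_suminf)
qed

lemma wnorm_le_fexp:
  assumes r: "0 \<le> r" and f: "wnorm_le r f B"
  shows "wnorm_le r (fexp f) (exp B)"
proof (rule wnorm_leI)
  fix F assume F: "finite F" "F \<subseteq> mons"
  define N where "N = (\<Sum>m\<in>F. mdeg m)"
  have "(\<Sum>m\<in>F. norm (fexp f m) * wt r m) \<le> (\<Sum>m\<in>F. \<Sum>n\<le>N. norm (fpow f n m) * wt r m / fact n)"
  proof (rule sum_mono)
    fix m assume m: "m \<in> F"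
    have "norm (fexp f m) * wt r m \<le> (\<Sum>n\<le>mdeg m. norm (fpow f n m / of_nat (fact n))) * wt r m"
      unfolding fexp_def by (intro mult_right_mono norm_sum wt_nonneg r)
    also have "\<dots> = (\<Sum>n\<le>mdeg m. norm (fpow f n m) * wt r m / fact n)"
      by (simp add: sum_distrib_right norm_divide)
    also have "\<dots> \<le> (\<Sum>n\<le>N. norm (fpow f n m) * wt r m / fact n)"
      using m F(1) r by (intro sum_mono2) (auto simp: N_def wt_nonneg intro: member_le_sum)
    finally show "norm (fexp f m) * wt r m \<le> (\<Sum>n\<le>N. norm (fpow f n m) * wt r m / fact n)" .
  qed
  also have "\<dots> = (\<Sum>n\<le>N. (\<Sum>m\<in>F. norm (fpow f n m) * wt r m) / fact n)"
    by (subst sum.swap) (simp add: sum_divide_distrib)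
  also have "\<dots> \<le> (\<Sum>n\<le>N. B ^ n / fact n)"
    using wnorm_leD[OF wnorm_le_fpow[OF r f] F] by (intro sum_mono divide_right_mono) auto
  also have "\<dots> \<le> exp B" by (rule sum_exp_series_le_exp[OF wnorm_le_nonneg[OF f]])
  finally show "(\<Sum>m\<in>F. norm (fexp f m) * wt r m) \<le> exp B" .
qed

lemma wnorm_le_locally_finite_sum:
  assumes r: "0 \<le> r"
    and f: "\<And>m. m \<in> mons \<Longrightarrow> f m = (\<Sum>i\<in>I m. g i m)"
    and I: "\<And>m. m \<in> mons \<Longrightarrow> finite (I m) \<and> I m \<subseteq> J"
    and g: "\<And>i. i \<in> J \<Longrightarrow> wnorm_le r (g i) (\<beta> i)"
    and \<beta>: "\<And>K. finite K \<Longrightarrow> K \<subseteq> J \<Longrightarrow> sum \<beta> K \<le> C"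
  shows "wnorm_le r f C"
proof (rule wnorm_leI)
  fix F assume F: "finite F" "F \<subseteq> mons"
  define K where "K = (\<Union>m\<in>F. I m)"
  have K: "finite K" "K \<subseteq> J" using F I by (auto simp: K_def)
  have "(\<Sum>m\<in>F. norm (f m) * wt r m) \<le> (\<Sum>m\<in>F. \<Sum>i\<in>K. norm (g i m) * wt r m)"
  proof (rule sum_mono)
    fix m assume m: "m \<in> F"
    then have "norm (f m) * wt r m \<le> (\<Sum>i\<in>I m. norm (g i m)) * wt r m"
      using F f by (auto intro!: mult_right_mono norm_sum wt_nonneg r)
    also have "\<dots> \<le> (\<Sum>i\<in>K. norm (g i m) * wt r m)"
      unfolding sum_distrib_right using K m r by (intro sum_mono2) (auto simp: K_def wt_nonneg)
    finally show "norm (f m) * wt r m \<le> (\<Sum>i\<in>K. norm (g i m) * wt r m)" .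
  qed
  also have "\<dots> = (\<Sum>i\<in>K. \<Sum>m\<in>F. norm (g i m) * wt r m)"
    by (rule sum.swap)
  also have "\<dots> \<le> sum \<beta> K"
    using K F by (intro sum_mono wnorm_leD[OF g]) auto
  also have "\<dots> \<le> C" using \<beta> K by blast
  finally show "(\<Sum>m\<in>F. norm (f m) * wt r m) \<le> C" .
qed

lemma sum_power_le_geometric:
  fixes x :: real
  assumes "finite S" "0 \<le> x" "x < 1"
  shows "(\<Sum>k\<in>S. x ^ k) \<le> 1 / (1 - x)"
  using sum_le_suminf[OF summable_geometric[of x], of S] suminf_geometric[of x] assms by simp

text \<open>Write q^{k+l} \<le> (2q)^3 2^{-k} 2^{-l} and sum the two geometric series.\<close>
lemma sum_powers_of_total_degree_le:
  fixes q :: real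
  assumes q: "0 \<le> q" "q \<le> 1/2" and K: "finite K" "K \<subseteq> {(k, l). 3 \<le> k + l}"
  shows "(\<Sum>(k, l)\<in>K. q ^ (k + l)) \<le> 32 * q ^ 3"
proof -
  have "(\<Sum>(k, l)\<in>K. q ^ (k + l)) \<le> (\<Sum>(k, l)\<in>K. 8 * q ^ 3 * ((1/2) ^ k * (1/2) ^ l))"
  proof (rule sum_mono, clarify)
    fix k l assume "(k, l) \<in> K"
    then have "(2 * q) ^ (k + l) \<le> (2 * q) ^ 3" using K q by (intro power_decreasing) auto
    have "q ^ (k + l) = (2 * q) ^ (k + l) * (1/2) ^ (k + l)"
      unfolding power_mult_distrib[symmetric] by simp
    also have "\<dots> \<le> (2 * q) ^ 3 * (1/2) ^ (k + l)"
      using \<open>(2 * q) ^ (k + l) \<le> (2 * q) ^ 3\<close> by (rule mult_right_mono) simp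
    also have "\<dots> = 8 * q ^ 3 * ((1/2) ^ k * (1/2) ^ l)"
      by (simp add: power_add)
    finally show "q ^ (k + l) \<le> 8 * q ^ 3 * ((1/2) ^ k * (1/2) ^ l)" .
  qed
  also have "\<dots> = 8 * q ^ 3 * (\<Sum>(k, l)\<in>K. (1/2) ^ k * (1/2) ^ l)"
    by (simp add: sum_distrib_left case_prod_unfold)
  also have "\<dots> \<le> 8 * q ^ 3 * (\<Sum>(k, l)\<in>fst ` K \<times> snd ` K. (1/2) ^ k * (1/2) ^ l)"
    using K q by (intro mult_left_mono sum_mono2) force+
  also have "\<dots> = 8 * q ^ 3 * ((\<Sum>k\<in>fst ` K. (1/2) ^ k) * (\<Sum>l\<in>snd ` K. (1/2) ^ l))"
    by (simp add: sum_product sum.cartesian_product)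
  also have "\<dots> \<le> 8 * q ^ 3 * (2 * 2)"
    using K q sum_power_le_geometric[of "fst ` K" "1/2"] sum_power_le_geometric[of "snd ` K" "1/2"]
    by (intro mult_left_mono mult_mono) (auto intro: sum_nonneg)
  finally show ?thesis by simp
qed

lemma finite_frhs_index: "m \<in> mons \<Longrightarrow> finite {(k, l). 2 * s < k + l \<and> 1 \<le> m (A k l)}"
proof -
  assume "m \<in> mons"
  then have "finite ((\<lambda>(k, l). A k l) -` {v. m v \<noteq> 0})"
    by (intro finite_vimageI) (auto simp: mons_def inj_on_def)
  then show ?thesis by (rule finite_subset[rotated]) auto
qed

lemma wnorm_le_frhs:
  assumes r: "0 \<le> r" and s: "0 < s" and c: "wnorm_le r c B" and q: "r * exp B \<le> 1/2"
  shows "wnorm_le r (frhs s c) (32 * (r * exp B) ^ 3)"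
proof (rule wnorm_le_locally_finite_sum[OF r])
  let ?g = "\<lambda>kl. fmul (fterm (fst kl) (snd kl)) (fexp (fscale (of_nat (fst kl + snd kl)) c))"
  show "frhs s c m = (\<Sum>kl\<in>{(k, l). 2 * s < k + l \<and> 1 \<le> m (A k l)}. ?g kl m)" for m
    by (simp add: frhs_def)
  show "finite {(k, l). 2 * s < k + l \<and> 1 \<le> m (A k l)} \<and>
        {(k, l). 2 * s < k + l \<and> 1 \<le> m (A k l)} \<subseteq> {(k, l). 3 \<le> k + l}" if "m \<in> mons" for m
    using finite_frhs_index[OF that] s by auto
  show "wnorm_le r (?g kl) ((r * exp B) ^ (fst kl + snd kl))" for kl
  proof -
    let ?n = "fst kl + snd kl"
    have "wnorm_le r (?g kl) (r ^ ?n * exp (norm (of_nat ?n :: complex) * B))"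
      by (intro wnorm_le_fmul wnorm_le_fterm wnorm_le_fexp wnorm_le_fscale r c)
    then show ?thesis by (simp only: norm_of_nat exp_of_nat_mult power_mult_distrib)
  qed
  show "sum (\<lambda>kl. (r * exp B) ^ (fst kl + snd kl)) K \<le> 32 * (r * exp B) ^ 3"
    if "finite K" "K \<subseteq> {(k, l). 3 \<le> k + l}" for K
    using sum_powers_of_total_degree_le[OF _ q that] r by (simp add: case_prod_unfold)
qed

text \<open>Truncating the solution below degree N + 1 gives a family dominated by the right-hand
  side applied to the truncation below degree N.\<close>
lemma wnorm_le_causal_fixpoint:
  assumes \<Phi>: "causal \<Phi>" and b: "mons_fixpoint \<Phi> b" and r: "0 \<le> r" and B: "0 \<le> B"
    and invariant: "\<And>c. wnorm_le r c B \<Longrightarrow> wnorm_le r (\<Phi> c) B"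
  shows "wnorm_le r b B"
proof -
  define trunc where "trunc N m = (if mdeg m < N then b m else 0)" for N m
  have trunc: "wnorm_le r (trunc N) B" for N
  proof (induction N)
    case 0
    show ?case using B by (simp add: wnorm_le_def trunc_def)
  next
    case (Suc N)
    show ?case
    proof (rule wnorm_le_dominated[OF _ r invariant[OF Suc.IH]])
      fix m assume m: "m \<in> mons"
      have "\<Phi> b m = \<Phi> (trunc N) m" if "mdeg m < Suc N"
      proof (rule causalD[OF \<Phi> m])
        fix q assume "q < m"
        then have "mdeg q < N" using mdeg_strict_mono[OF m] that by fastforce
        then show "b q = trunc N q" by (simp add: trunc_def)
      qed
      then show "norm (trunc (Suc N) m) \<le> norm (\<Phi> (trunc N) m)"
        using b m by (auto simp: trunc_def mons_fixpoint_def)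
    qed
  qed
  show ?thesis
  proof (rule wnorm_leI)
    fix F assume F: "finite F" "F \<subseteq> mons"
    define N where "N = Suc (\<Sum>m\<in>F. mdeg m)"
    have "(\<Sum>m\<in>F. norm (b m) * wt r m) = (\<Sum>m\<in>F. norm (trunc N m) * wt r m)"
      using F(1) by (intro sum.cong refl) (auto simp: trunc_def N_def intro: le_imp_less_Suc member_le_sum)
    also have "\<dots> \<le> B" using wnorm_leD[OF trunc F] .
    finally show "(\<Sum>m\<in>F. norm (b m) * wt r m) \<le> B" .
  qed
qed

lemma wnorm_le_bstar:
  assumes "is_bstar s b" "0 < s" "0 \<le> r" "r * exp 1 \<le> 1/2" "32 * (r * exp 1) ^ 3 \<le> 1"
  shows "wnorm_le r b 1"
proof (rule wnorm_le_causal_fixpoint[OF causal_frhs])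
  show "mons_fixpoint (frhs s) b" using assms(1) by (simp add: is_bstar_iff_fixpoint)
  show "wnorm_le r (frhs s c) 1" if "wnorm_le r c 1" for c
    using wnorm_le_frhs[OF assms(3,2) that assms(4)] assms(5) by (rule wnorm_le_mono)
qed (use assms in auto)

lemma wnorm_le_psi:
  assumes "is_bstar s b" "0 < s" and r: "0 \<le> r" and "r * exp 1 \<le> 1/2" "32 * (r * exp 1) ^ 3 \<le> 1"
  shows "wnorm_le r (psi1 b) (exp 1 * r)" and "wnorm_le r (psi2 b) (exp 1 * r)"
proof -
  have "wnorm_le r (fexp b) (exp 1)"
    using wnorm_le_fexp[OF r wnorm_le_bstar[OF assms]] .
  then show "wnorm_le r (psi1 b) (exp 1 * r)" "wnorm_le r (psi2 b) (exp 1 * r)"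
    unfolding psi1_def psi2_def using wnorm_le_fmul wnorm_le_fxi wnorm_le_feta r by blast+
qed

lemma norm_mval_le_wt:
  assumes m: "m \<in> mons" and xy: "norm x \<le> r" "norm y \<le> r" and a: "\<And>i j. norm (a i j) \<le> 1"
  shows "norm (mval x y a m) \<le> wt r m"
proof -
  define S where "S = {v. m v \<noteq> 0}"
  define e where "e v = (if v = Xi \<or> v = Eta then m v else 0)" for v
  have S: "finite S" using m by (simp add: S_def mons_def)
  have "(\<Sum>v\<in>S. e v) = (\<Sum>v\<in>{Xi, Eta}. e v)"
    using S by (intro sum.mono_neutral_cong) (auto simp: e_def S_def)
  then have e_sum: "(\<Sum>v\<in>S. e v) = m Xi + m Eta" by (simp add: e_def)
  have "norm (mval x y a m) = (\<Prod>v\<in>S. norm (varval x y a v) ^ m v)"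
    by (simp add: mval_def S_def prod_norm[symmetric] norm_power)
  also have "\<dots> \<le> (\<Prod>v\<in>S. r ^ e v)"
  proof (intro prod_mono conjI)
    fix v
    show "norm (varval x y a v) ^ m v \<le> r ^ e v"
      by (cases v) (auto simp: varval_def e_def xy a intro: power_mono power_le_one)
  qed simp
  also have "\<dots> = wt r m" by (simp add: power_sum[symmetric] e_sum wt_def)
  finally show ?thesis .
qed

lemma wnorm_le_fval:
  assumes f: "wnorm_le r f B" and xy: "norm x \<le> r" "norm y \<le> r" and a: "\<And>i j. norm (a i j) \<le> 1"
  shows "abs_conv f x y a" and "norm (fval f x y a) \<le> B"
proof -
  have partial_sums: "(\<Sum>m\<in>F. norm (f m * mval x y a m)) \<le> B" if F: "finite F" "F \<subseteq> mons" for F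
  proof -
    have "(\<Sum>m\<in>F. norm (f m * mval x y a m)) \<le> (\<Sum>m\<in>F. norm (f m) * wt r m)"
      using F norm_mval_le_wt[where a = a, OF _ xy a]
      by (intro sum_mono) (auto simp: norm_mult intro!: mult_left_mono)
    also have "\<dots> \<le> B" using wnorm_leD[OF f F] .
    finally show ?thesis .
  qed
  then have summable: "(\<lambda>m. norm (f m * mval x y a m)) summable_on mons"
    by (intro nonneg_bdd_above_summable_on bdd_aboveI2) auto
  then show "abs_conv f x y a" by (simp add: abs_conv_def)
  have "norm (fval f x y a) \<le> (\<Sum>\<^sub>\<infinity>m\<in>mons. norm (f m * mval x y a m))"
    unfolding fval_def using summable by (rule norm_infsum_bound)
  also have "\<dots> \<le> B" using summable partial_sums by (rule infsum_le_finite_sums)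
  finally show "norm (fval f x y a) \<le> B" .
qed

lemma Dinf_norm_le_1: "a \<in> Dinf s \<Longrightarrow> norm (a i j) \<le> 1"
  by (cases "2 * s < i + j") (auto simp: Dinf_def)

theorem lemma4p2:
  fixes s :: nat
  assumes "0 < s"
  shows "(\<exists>!b. is_bstar s b) \<and>
    (\<exists>R1::real. 0 < R1 \<and> R1 < 1 \<and>
      (\<forall>b. is_bstar s b \<longrightarrow>
        (\<forall>x y a. norm x < R1 \<and> norm y < R1 \<and> a \<in> Dinf s \<longrightarrow>
           abs_conv (psi1 b) x y a \<and> abs_conv (psi2 b) x y a \<and>
           norm (fval (psi1 b) x y a) < 1/3 \<and> norm (fval (psi2 b) x y a) < 1/3)))"
proof (intro conjI ex1_bstar exI[of _ "1/20"] allI impI)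
  define r :: real where "r = 1/20"
  have re: "r * exp 1 \<le> 3/20" using exp_le by (simp add: r_def)
  then have "(r * exp 1) ^ 3 \<le> (3/20) ^ 3" by (intro power_mono) (auto simp: r_def)
  moreover have "(3/20::real) ^ 3 = 27/8000" by (simp add: power_divide)
  ultimately have "32 * (r * exp 1) ^ 3 \<le> 1" by linarith
  fix b :: fser and x y :: complex and a :: "nat \<Rightarrow> nat \<Rightarrow> complex"
  assume b: "is_bstar s b" and xya: "norm x < 1/20 \<and> norm y < 1/20 \<and> a \<in> Dinf s"
  then have xy: "norm x \<le> r" "norm y \<le> r" and a: "\<And>i j. norm (a i j) \<le> 1"
    by (auto simp: r_def Dinf_norm_le_1)
  have "0 \<le> r" by (simp add: r_def)
  have psi: "wnorm_le r (psi1 b) (exp 1 * r)" "wnorm_le r (psi2 b) (exp 1 * r)"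
    using wnorm_le_psi[OF b assms \<open>0 \<le> r\<close>] re \<open>32 * (r * exp 1) ^ 3 \<le> 1\<close> by simp_all
  have "exp 1 * r < 1/3" using re by (simp add: mult.commute)
  then show "abs_conv (psi1 b) x y a" "abs_conv (psi2 b) x y a"
    and "norm (fval (psi1 b) x y a) < 1/3" "norm (fval (psi2 b) x y a) < 1/3"
    using wnorm_le_fval[where a = a, OF psi(1) xy a] wnorm_le_fval[where a = a, OF psi(2) xy a]
    by auto
qed simp_all

end
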